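(* Let $k\ge 3$, $\varepsilon\in[0,\tfrac12)$, let $b=(b_0,\dots,b_{k-1})$ be the counterclockwise vertices of a convex polygon (consecutive collinear vertices allowed), and let $b^+=\Phi_\varepsilon(b)$. For each $j\in\{0,\dots,k-1\}$ let $Q_j$ be the quadrilateral with corners $b_j, b_{j+1}, b^+_{j+1}, b^+_j$ in this cyclic order (indices mod $k$). Then no $Q_j$ is twisted (its boundary is not self-intersecting, i.e. the side $\overline{b_jb_{j+1}}$ does not cross the side $\overline{b^+_{j+1}b^+_j}$ and the side $\overline{b_{j+1}b^+_{j+1}}$ does not cross the side $\overline{b^+_jb_j}$ at a single interior point), and for $j\ne j'$ the quadrilaterals $Q_j$ and $Q_{j'}$ do not overlap (their interiors are disjoint).
   Context: The $\varepsilon$-GtM step is the map $\Phi_\varepsilon\colon(\mathbb{R}^2)^k\to(\mathbb{R}^2)^k$, $(b_0,\dots,b_{k-1})\mapsto(b_0^+,\dots,b_{k-1}^+)$ with $b_j^+=\varepsilon\frac{b_{j-1}+b_{j+1}}{2}+(1-\varepsilon)b_j$, indices modulo $k$. The quadrilaterals $Q_j$ are called wave-segments; together they partition the region between the polygon $b$ and the polygon $b^+$. *)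

theory Defs
  imports "HOL-Complex_Analysis.Complex_Analysis"
begin

text \<open>Points of the plane R^2 are represented as complex numbers.
  A polygon with k vertices is a function b :: nat => complex, of which only
  b 0, ..., b (k-1) matter; indices are taken modulo k.\<close>

definition cross2 :: "complex \<Rightarrow> complex \<Rightarrow> real" where
  "cross2 u v = Im (cnj u * v)"

definition vtx :: "nat \<Rightarrow> (nat \<Rightarrow> complex) \<Rightarrow> nat \<Rightarrow> complex" where
  "vtx k b j = b (j mod k)"

definition gtm_step :: "nat \<Rightarrow> real \<Rightarrow> (nat \<Rightarrow> complex) \<Rightarrow> nat \<Rightarrow> complex" where
  "gtm_step k eps b j =
     of_real eps * (vtx k b (j + k - 1) + vtx k b (j + 1)) / 2 + of_real (1 - eps) * vtx k b j"

text \<open>b_0,...,b_{k-1} are the counterclockwise vertices of a (nondegenerate) convex polygon,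
  consecutive collinear vertices allowed: the vertices are pairwise distinct, every vertex
  lies weakly to the left of every directed edge line b_i b_{i+1}, and not all vertices are
  collinear.\<close>
definition convex_ccw_polygon :: "nat \<Rightarrow> (nat \<Rightarrow> complex) \<Rightarrow> bool" where
  "convex_ccw_polygon k b \<longleftrightarrow>
     inj_on b {..<k} \<and>
     (\<forall>i<k. \<forall>j<k. cross2 (vtx k b (i + 1) - b i) (b j - b i) \<ge> 0) \<and>
     (\<exists>i<k. \<exists>j<k. cross2 (vtx k b (i + 1) - b i) (b j - b i) > 0)"

definition segments_cross :: "complex \<Rightarrow> complex \<Rightarrow> complex \<Rightarrow> complex \<Rightarrow> bool" where
  "segments_cross p q r s \<longleftrightarrow>
     (\<exists>x. closed_segment p q \<inter> closed_segment r s = {x} \<and>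
          x \<in> open_segment p q \<and> x \<in> open_segment r s)"

definition quad_twisted :: "complex \<Rightarrow> complex \<Rightarrow> complex \<Rightarrow> complex \<Rightarrow> bool" where
  "quad_twisted a b c d \<longleftrightarrow> segments_cross a b c d \<or> segments_cross b c d a"

definition quad_path :: "complex \<Rightarrow> complex \<Rightarrow> complex \<Rightarrow> complex \<Rightarrow> real \<Rightarrow> complex" where
  "quad_path a b c d = linepath a b +++ linepath b c +++ linepath c d +++ linepath d a"

definition quad_interior :: "complex \<Rightarrow> complex \<Rightarrow> complex \<Rightarrow> complex \<Rightarrow> complex set" where
  "quad_interior a b c d =
     {z. z \<notin> path_image (quad_path a b c d) \<and> winding_number (quad_path a b c d) z \<noteq> 0}"

definition wave_twisted :: "nat \<Rightarrow> real \<Rightarrow> (nat \<Rightarrow> complex) \<Rightarrow> nat \<Rightarrow> bool" where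
  "wave_twisted k eps b j =
     quad_twisted (vtx k b j) (vtx k b (j + 1))
       (vtx k (gtm_step k eps b) (j + 1)) (vtx k (gtm_step k eps b) j)"

definition wave_interior :: "nat \<Rightarrow> real \<Rightarrow> (nat \<Rightarrow> complex) \<Rightarrow> nat \<Rightarrow> complex set" where
  "wave_interior k eps b j =
     quad_interior (vtx k b j) (vtx k b (j + 1))
       (vtx k (gtm_step k eps b) (j + 1)) (vtx k (gtm_step k eps b) j)"

end

theory Submission
  imports Defs
begin

text \<open>Everything is read off the orientation (signed area) of triples of points.
  In a convex polygon every triple of vertices taken in cyclic order is nonnegatively oriented.
  Each new vertex is a convex combination of three consecutive old ones, and for
  \<open>\<epsilon> \<le> 1/2\<close> the resulting polynomial identities in \<open>\<epsilon>\<close> have nonnegative coefficients, so: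
  every wave-segment is star-shaped from the midpoint of its old side (its four triangles from
  there are nonnegatively oriented), both new corners lie left of the old side, and the new
  polygon is star-shaped from its first vertex.

  The first two facts exclude twisting. For disjointness take a point \<open>z\<close> common to two
  interiors and off all segments between the finitely many relevant points. The winding number of
  a wave-segment around \<open>z\<close> is a sum of four triangle winding numbers, each 0 or 1, so it is a
  natural number, positive on the interior. Summed over all wave-segments these telescope to the
  winding number of the old polygon minus that of the new one. The old fan triangles from
  \<open>b\<^sub>0\<close> have disjoint interiors, so the first term is at most 1; the second is a sum of
  triangle winding numbers and hence nonnegative. So at most one wave-segment contains \<open>z\<close>.\<close>

section \<open>Orientation\<close>

definition orient :: "complex \<Rightarrow> complex \<Rightarrow> complex \<Rightarrow> real" where
  "orient a b c = cross2 (b - a) (c - a)"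

lemma orient_coords: "orient a b c = (Re b - Re a) * (Im c - Im a) - (Im b - Im a) * (Re c - Re a)"
  by (simp add: orient_def cross2_def algebra_simps)

lemma orient_rotate: "orient a b c = orient b c a"
  by (simp add: orient_coords algebra_simps)

lemma orient_swap: "orient a c b = - orient a b c"
  by (simp add: orient_coords algebra_simps)

lemma orient_degenerate [simp]: "orient a a c = 0" "orient a b a = 0" "orient a b b = 0"
  by (simp_all add: orient_coords)

lemma cross2_eq_0_imp_parallel:
  assumes "u \<noteq> 0" "cross2 u v = 0"
  shows "\<exists>t. v = of_real t * u"
proof -
  have "Im (v / u) = 0"
    using assms by (simp add: Im_divide cross2_def algebra_simps)
  then have "v / u = of_real (Re (v / u))" by (simp add: complex_eq_iff)
  then have "v = of_real (Re (v / u)) * u" using assms(1) by (simp add: field_simps)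
  then show ?thesis by blast
qed

lemma orient_eq_0_on_line:
  assumes "a \<noteq> b" "orient a b x = 0" "orient a b y = 0"
  shows "orient a x y = 0"
proof -
  have "b - a \<noteq> 0" using assms(1) by simp
  then obtain s t where "x - a = of_real s * (b - a)" "y - a = of_real t * (b - a)"
    using assms(2,3) cross2_eq_0_imp_parallel unfolding orient_def by metis
  then have "orient a x y = cross2 (of_real s * (b - a)) (of_real t * (b - a))"
    by (simp add: orient_def)
  also have "\<dots> = s * t * Im (cnj (b - a) * (b - a))"
    by (simp add: cross2_def algebra_simps)
  finally show ?thesis by (simp add: algebra_simps)
qed

lemma orient_convex_combination:
  assumes "u + v + w = 1"
  shows "orient p q (u *\<^sub>R a + v *\<^sub>R b + w *\<^sub>R c) = u * orient p q a + v * orient p q b + w * orient p q c"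
  using assms unfolding orient_coords by (simp add: scaleR_conv_of_real; algebra)

lemma collinear_if_orient_eq_0:
  assumes "orient a b c = 0"
  shows "collinear {a, b, c}"
proof (cases "a = b")
  case False
  then obtain t where "c - a = of_real t * (b - a)"
    using assms cross2_eq_0_imp_parallel[of "b - a"] by (auto simp: orient_def)
  then have "collinear {0, b - a, c - a}"
    unfolding collinear_lemma by (auto simp: scaleR_conv_of_real)
  then show ?thesis using collinear_3[of b a c] by (simp add: insert_commute)
qed (simp add: collinear_2)

section \<open>Convex position\<close>

lemma mod_add_right_cancel:
  fixes x y s k :: nat
  assumes "(x + s) mod k = (y + s) mod k"
  shows "x mod k = y mod k"
proof (cases "k = 0")
  case False
  have "(x + s + (k * s - s)) mod k = (y + s + (k * s - s)) mod k"
    using mod_add_cong[OF assms refl] .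
  moreover have "z + s + (k * s - s) = z + k * s" for z
    using False by (simp add: le_add_diff_inverse2)
  ultimately show ?thesis by simp
qed (use assms in simp)

definition convex_position :: "nat \<Rightarrow> (nat \<Rightarrow> complex) \<Rightarrow> bool" where
  "convex_position k b \<longleftrightarrow>
     inj_on b {..<k} \<and> (\<forall>i<k. \<forall>j<k. 0 \<le> orient (b i) (vtx k b (i + 1)) (b j))"

lemma convex_ccw_polygon_imp_convex_position:
  "convex_ccw_polygon k b \<Longrightarrow> convex_position k b"
  by (simp add: convex_ccw_polygon_def convex_position_def orient_def)

lemma convex_position_inj:
  "convex_position k b \<Longrightarrow> i < k \<Longrightarrow> j < k \<Longrightarrow> b i = b j \<Longrightarrow> i = j"
  by (auto simp: convex_position_def dest: inj_onD)

lemma convex_position_left: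
  "convex_position k b \<Longrightarrow> i < k \<Longrightarrow> j < k \<Longrightarrow> 0 \<le> orient (b i) (vtx k b (i + 1)) (b j)"
  by (simp add: convex_position_def)

lemma convex_position_edge:
  assumes "convex_position k b" "Suc i < k" "j < k"
  shows "0 \<le> orient (b i) (b (Suc i)) (b j)"
proof -
  have "vtx k b (i + 1) = b (Suc i)" using assms(2) by (simp add: vtx_def)
  then show ?thesis using convex_position_left[OF assms(1) _ assms(3), of i] assms(2) by simp
qed

lemma convex_position_last_edge:
  assumes "convex_position k b" "j < k"
  shows "0 \<le> orient (b (k - 1)) (b 0) (b j)"
proof -
  have "vtx k b (k - 1 + 1) = b 0" using assms(2) by (simp add: vtx_def)
  then show ?thesis using convex_position_left[OF assms(1) _ assms(2), of "k - 1"] assms(2) by simp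
qed

lemma convex_position_rotate:
  assumes "convex_position k b"
  shows "convex_position k (\<lambda>i. vtx k b (i + s))"
proof -
  have "inj_on (\<lambda>i. vtx k b (i + s)) {..<k}"
  proof (rule inj_onI)
    fix x y assume "x \<in> {..<k}" "y \<in> {..<k}" "vtx k b (x + s) = vtx k b (y + s)"
    moreover have "(x + s) mod k < k" "(y + s) mod k < k" using \<open>x \<in> {..<k}\<close> by simp_all
    ultimately have "(x + s) mod k = (y + s) mod k"
      using convex_position_inj[OF assms] by (simp add: vtx_def)
    then have "x mod k = y mod k" by (rule mod_add_right_cancel)
    then show "x = y" using \<open>x \<in> {..<k}\<close> \<open>y \<in> {..<k}\<close> by simp
  qed
  moreover have "0 \<le> orient (vtx k b (i + s)) (vtx k (\<lambda>i. vtx k b (i + s)) (i + 1)) (vtx k b (j + s))"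
    if "i < k" "j < k" for i j
  proof -
    have "((i + 1) mod k + s) mod k = ((i + s) mod k + 1) mod k"
      by (simp add: mod_simps ac_simps)
    then have "vtx k (\<lambda>i. vtx k b (i + s)) (i + 1) = vtx k b ((i + s) mod k + 1)"
      by (simp add: vtx_def)
    moreover have "(i + s) mod k < k" "(j + s) mod k < k" using that by simp_all
    ultimately show ?thesis
      using convex_position_left[OF assms] by (simp add: vtx_def)
  qed
  ultimately show ?thesis by (simp add: convex_position_def)
qed

lemma cone_det_trans:
  fixes a c a' c' a'' c'' :: real
  assumes "0 \<le> a" "0 \<le> c" "0 \<le> a'" "0 \<le> c'" "0 \<le> a''" "0 \<le> c''" "0 < a' + c'"
    "0 \<le> a * c' - c * a'" "0 \<le> a' * c'' - c' * a''"
  shows "0 \<le> a * c'' - c * a''"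
proof (cases "a' > 0")
  case True
  have "a' * (a * c'' - c * a'') = a * (a' * c'' - c' * a'') + a'' * (a * c' - c * a')"
    by (simp add: algebra_simps)
  also have "\<dots> \<ge> 0" using assms by simp
  finally have "0 \<le> a' * (a * c'' - c * a'')" .
  then show ?thesis using True by (simp add: zero_le_mult_iff)
next
  case False
  then have "a' = 0" "c' > 0" using assms by auto
  then have "a'' = 0" using assms by (simp add: mult_le_0_iff)
  then show ?thesis using assms by simp
qed

lemma convex_position_orient_nonneg_pointed:
  assumes conv: "convex_position k b" and k: "3 \<le> k"
    and pointed: "0 < orient (b 0) (b 1) (b (k - 1))"
    and mn: "m \<le> n" "n < k"
  shows "0 \<le> orient (b 0) (b m) (b n)"
proof (cases "m = 0")
  case False
  define A where "A x = orient (b 0) (b x) (b (k - 1))" for x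
  define C where "C x = orient (b 0) (b 1) (b x)" for x
  define D where "D = orient (b 0) (b 1) (b (k - 1))"
  have A: "0 \<le> A x" if "x < k" for x
    using convex_position_last_edge[OF conv that] by (simp add: A_def orient_rotate)
  have C: "0 \<le> C x" if "x < k" for x
    using convex_position_edge[OF conv _ that, of 0] k by (simp add: C_def)
  have det: "D * orient (b 0) (b x) (b y) = A x * C y - C x * A y" for x y
    by (simp add: A_def C_def D_def orient_coords; algebra)
  have coords:
    "of_real D * (b x - b 0) = of_real (A x) * (b 1 - b 0) + of_real (C x) * (b (k - 1) - b 0)" for x
    by (simp add: A_def C_def D_def orient_coords complex_eq_iff; algebra)
  \<comment> \<open>in the coordinates (A, C) of the cone spanned by b 1 - b 0 and b (k - 1) - b 0, no b x with
    x \<noteq> 0 sits at the apex, so nonnegative determinants are transitive along the chain m, ..., n\<close>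
  have off_apex: "0 < A x + C x" if "1 \<le> x" "x < k" for x
  proof (rule ccontr)
    assume "\<not> 0 < A x + C x"
    then have "A x = 0" "C x = 0" using A[OF that(2)] C[OF that(2)] by linarith+
    then have "b x = b 0" using coords[of x] pointed by (simp add: D_def)
    then show False using convex_position_inj[OF conv that(2), of 0] that by simp
  qed
  have "0 \<le> A m * C n' - C m * A n'" if "m \<le> n'" "n' < k" for n'
    using that
  proof (induction n' rule: dec_induct)
    case (step n')
    have "0 \<le> D * orient (b n') (b (Suc n')) (b 0)"
      using convex_position_edge[OF conv step.prems, of 0] pointed k by (simp add: D_def)
    then have next_det: "0 \<le> A n' * C (Suc n') - C n' * A (Suc n')"
      using det[of n' "Suc n'"] orient_rotate[of "b 0" "b n'" "b (Suc n')"] by simp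
    show ?case
      by (rule cone_det_trans[OF A C A C A C off_apex _ next_det]) (use step False in auto)
  qed simp
  then have "0 \<le> D * orient (b 0) (b m) (b n)" using det mn by simp
  then show ?thesis using pointed by (simp add: D_def zero_le_mult_iff)
qed simp

lemma convex_position_apex_cases:
  assumes conv: "convex_position k b" and k: "3 \<le> k"
  obtains (pointed) "0 < orient (b 0) (b 1) (b (k - 1))"
    | (collinear) "\<And>x. x < k \<Longrightarrow> orient (b 0) (b 1) (b x) = 0"
    | (flat) s where "0 < s" "b (k - 1) = b 0 - of_real s * (b 1 - b 0)"
proof -
  have C: "0 \<le> orient (b 0) (b 1) (b x)" if "x < k" for x
    using convex_position_edge[OF conv _ that, of 0] k by simp
  have A: "0 \<le> orient (b 0) (b x) (b (k - 1))" if "x < k" for x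
    using convex_position_last_edge[OF conv that] by (simp add: orient_rotate)
  have ne: "b 1 - b 0 \<noteq> 0" "b (k - 1) \<noteq> b 0"
    using convex_position_inj[OF conv, of 1 0] convex_position_inj[OF conv, of "k - 1" 0] k by auto
  consider "0 < orient (b 0) (b 1) (b (k - 1))" | "orient (b 0) (b 1) (b (k - 1)) = 0"
    using C[of "k - 1"] k by linarith
  then show ?thesis
  proof cases
    case 2
    then obtain t where t: "b (k - 1) - b 0 = of_real t * (b 1 - b 0)"
      using cross2_eq_0_imp_parallel[OF ne(1)] by (auto simp: orient_def)
    show ?thesis
    proof (cases "t < 0")
      case True
      then show ?thesis using t by (intro flat[of "- t"]) (simp_all add: algebra_simps)
    next
      case False
      then have "0 < t" using t ne(2) by (cases "t = 0") auto
      have bk: "b (k - 1) = b 0 + of_real t * (b 1 - b 0)" using t by (simp add: algebra_simps)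
      have "orient (b 0) (b x) (b (k - 1)) = - t * orient (b 0) (b 1) (b x)" for x
        unfolding bk by (simp add: orient_coords algebra_simps)
      then have "orient (b 0) (b 1) (b x) = 0" if "x < k" for x
        using A[OF that] C[OF that] \<open>0 < t\<close> by (simp add: mult_le_0_iff)
      then show ?thesis by (rule collinear)
    qed
  qed (rule pointed)
qed

lemma convex_position_delete_flat_first:
  assumes conv: "convex_position k b" and k: "3 \<le> k"
    and s: "0 < s" and flat: "b (k - 1) = b 0 - of_real s * (b 1 - b 0)"
  shows "convex_position (k - 1) (\<lambda>i. b (Suc i))"
proof -
  have "inj_on (\<lambda>i. b (Suc i)) {..<k - 1}"
  proof (rule inj_onI)
    fix x y assume "x \<in> {..<k - 1}" "y \<in> {..<k - 1}" "b (Suc x) = b (Suc y)"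
    then show "x = y" using convex_position_inj[OF conv, of "Suc x" "Suc y"] by simp
  qed
  moreover have "0 \<le> orient (b (Suc i)) (vtx (k - 1) (\<lambda>i. b (Suc i)) (i + 1)) (b (Suc j))"
    if "i < k - 1" "j < k - 1" for i j
  proof (cases "i + 1 < k - 1")
    case True
    then show ?thesis using convex_position_edge[OF conv, of "Suc i" "Suc j"] that
      by (simp add: vtx_def)
  next
    case False
    then have "Suc i = k - 1" using that by simp
    then have "vtx (k - 1) (\<lambda>i. b (Suc i)) (i + 1) = b 1" by (simp add: vtx_def)
    moreover have "orient (b (k - 1)) (b 1) x = (1 + s) * orient (b 0) (b 1) x" for x
      unfolding flat by (simp add: orient_coords algebra_simps)
    ultimately show ?thesis
      using convex_position_edge[OF conv, of 0 "Suc j"] \<open>Suc i = k - 1\<close> that s k by simp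
  qed
  ultimately show ?thesis by (simp add: convex_position_def)
qed

lemma convex_position_orient_nonneg:
  assumes "convex_position k b" "p \<le> q" "q \<le> r" "r < k"
  shows "0 \<le> orient (b p) (b q) (b r)"
  using assms
proof (induction k arbitrary: b p q r rule: less_induct)
  case (less k)
  define c where "c i = vtx k b (i + p)" for i
  have conv: "convex_position k c"
    unfolding c_def by (rule convex_position_rotate[OF less.prems(1)])
  have "0 \<le> orient (c 0) (c m) (c n)" if "0 < m" "m \<le> n" "n < k" "3 \<le> k" for m n
    using conv \<open>3 \<le> k\<close>
  proof (cases rule: convex_position_apex_cases)
    case pointed
    then show ?thesis using convex_position_orient_nonneg_pointed[OF conv] that by simp
  next
    case collinear
    have "c 0 \<noteq> c 1" using convex_position_inj[OF conv, of 0 1] that by auto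
    then show ?thesis using collinear that by (simp add: orient_eq_0_on_line)
  next
    case (flat s)
    let ?c' = "\<lambda>i. c (Suc i)"
    have conv': "convex_position (k - 1) ?c'"
      by (rule convex_position_delete_flat_first[OF conv \<open>3 \<le> k\<close> flat])
    have Suc_pred: "Suc (k - 2) = k - 1" "Suc (m - 1) = m" "Suc (n - 1) = n" using that by simp_all
    have "0 \<le> orient (?c' 0) (?c' (m - 1)) (?c' (n - 1))"
      using less.IH[OF _ conv', of 0 "m - 1" "n - 1"] that by simp
    then have left: "0 \<le> orient (c 1) (c m) (c n)" unfolding Suc_pred by simp
    have "0 \<le> orient (?c' (m - 1)) (?c' (n - 1)) (?c' (k - 2))"
      using less.IH[OF _ conv', of "m - 1" "n - 1" "k - 2"] that by simp
    then have right: "0 \<le> orient (c (k - 1)) (c m) (c n)"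
      unfolding Suc_pred using orient_rotate[of "c (k - 1)"] by simp
    \<comment> \<open>c 0 lies strictly inside the segment from c (k - 1) to c 1\<close>
    have "(1 + s) * orient (c 0) (c m) (c n) =
        orient (c (k - 1)) (c m) (c n) + s * orient (c 1) (c m) (c n)"
      unfolding flat by (simp add: orient_coords algebra_simps)
    then have "0 \<le> (1 + s) * orient (c 0) (c m) (c n)" using left right flat by simp
    then show ?thesis using flat by (simp add: zero_le_mult_iff)
  qed
  moreover have "b x = c (x - p)" if "p \<le> x" "x < k" for x
    using that by (simp add: c_def vtx_def)
  moreover have "p = q \<or> q = r \<or> p < q \<and> 3 \<le> k" using less.prems by linarith
  ultimately show ?case using less.prems by (elim disjE) (auto simp: zero_less_diff)
qed

lemma convex_position_orient_nonneg_cyclic: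
  assumes conv: "convex_position k b" and "p \<le> q" "q \<le> r" "r \<le> p + k"
  shows "0 \<le> orient (vtx k b p) (vtx k b q) (vtx k b r)"
proof (cases "r = p + k")
  case True
  then show ?thesis by (simp add: vtx_def)
next
  case False
  have "0 \<le> orient (vtx k b (0 + p)) (vtx k b (q - p + p)) (vtx k b (r - p + p))"
    using convex_position_orient_nonneg[OF convex_position_rotate[OF conv, of p], of 0 "q - p" "r - p"]
      assms False by simp
  then show ?thesis using assms by simp
qed

lemma convex_position_window:
  assumes "convex_position k b" "p \<le> q" "q \<le> r" "r \<le> p + k"
  shows "0 \<le> orient (vtx k b (c + p)) (vtx k b (c + q)) (vtx k b (c + r))"
  using convex_position_orient_nonneg_cyclic[OF assms(1), of "c + p" "c + q" "c + r"] assms by simp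

section \<open>The GtM step\<close>

definition smooth :: "real \<Rightarrow> complex \<Rightarrow> complex \<Rightarrow> complex \<Rightarrow> complex" where
  "smooth e x y z = of_real e * (x + z) / 2 + of_real (1 - e) * y"

lemma vtx_add_period: "vtx k b (i + k) = vtx k b i"
  by (simp add: vtx_def)

lemma vtx_mod_add: "vtx k b (i mod k + m) = vtx k b (i + m)"
  by (simp add: vtx_def mod_add_left_eq)

lemma vtx_gtm_step:
  assumes "0 < k"
  shows "vtx k (gtm_step k eps b) (j + t) =
    smooth eps (vtx k b (j + (k - 1) + t)) (vtx k b (j + (k - 1) + Suc t))
      (vtx k b (j + (k - 1) + Suc (Suc t)))"
proof -
  have "vtx k (gtm_step k eps b) (j + t) =
      smooth eps (vtx k b ((j + t) mod k + (k - 1))) (vtx k b ((j + t) mod k + 0))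
        (vtx k b ((j + t) mod k + 1))"
    using assms by (simp add: vtx_def gtm_step_def smooth_def)
  also have "\<dots> = smooth eps (vtx k b (j + t + (k - 1))) (vtx k b (j + t + k)) (vtx k b (j + t + 1 + k))"
    unfolding vtx_mod_add by (simp add: vtx_def del: add_Suc_right)
  moreover have "j + (k - 1) + t = j + t + (k - 1)" "j + (k - 1) + Suc t = j + t + k"
    "j + (k - 1) + Suc (Suc t) = j + t + 1 + k" using assms by simp_all
  ultimately show ?thesis by simp
qed

lemma orient_smooth_third:
  "orient a b (smooth e y0 y1 y2) = e/2 * orient a b y0 + (1 - e) * orient a b y1 + e/2 * orient a b y2"
  by (simp add: smooth_def orient_coords field_simps; algebra)

lemma orient_smooth_triangle:
  "orient (smooth e z x y) (smooth e x y z) (smooth e y z x) = (1 - 3*e/2)^2 * orient x y z"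
  by (simp add: smooth_def orient_coords field_simps power2_eq_square; algebra)

lemma orient_smooth_consecutive_nonneg:
  fixes x :: "nat \<Rightarrow> complex" and e :: real
  assumes e: "0 \<le> e" "e \<le> 1/2"
    and conv: "\<And>p q r. p < q \<Longrightarrow> q < r \<Longrightarrow> r \<le> 4 \<Longrightarrow> 0 \<le> orient (x p) (x q) (x r)"
  shows "0 \<le> orient (smooth e (x 0) (x 1) (x 2)) (smooth e (x 1) (x 2) (x 3))
    (smooth e (x 2) (x 3) (x 4))"
proof -
  define c1 c2 c3 c4 where "c1 = e^3/8" and "c2 = e^2/4 - e^3/4"
    and "c3 = e/2 - e^2 + 3*e^3/8" and "c4 = 1 - 3*e + 5/2*e^2 - e^3/2"
  have "orient (smooth e (x 0) (x 1) (x 2)) (smooth e (x 1) (x 2) (x 3)) (smooth e (x 2) (x 3) (x 4)) =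
      c1 * orient (x 0) (x 1) (x 2) + c2 * orient (x 0) (x 1) (x 3) + c1 * orient (x 0) (x 1) (x 4)
    + c3 * orient (x 0) (x 2) (x 3) + c2 * orient (x 0) (x 2) (x 4) + c1 * orient (x 0) (x 3) (x 4)
    + c4 * orient (x 1) (x 2) (x 3) + c3 * orient (x 1) (x 2) (x 4) + c2 * orient (x 1) (x 3) (x 4)
    + c1 * orient (x 2) (x 3) (x 4)"
    unfolding c1_def c2_def c3_def c4_def smooth_def orient_coords
    by (simp add: field_simps power2_eq_square power3_eq_cube; algebra)
  moreover have "0 \<le> c1" using e by (simp add: c1_def)
  moreover have "0 \<le> c2"
  proof -
    have "c2 = e^2 * (1 - e) / 4" by (simp add: c2_def power2_eq_square power3_eq_cube algebra_simps)
    moreover have "0 \<le> e^2 * (1 - e)" using e by simp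
    ultimately show ?thesis by simp
  qed
  moreover have "0 \<le> c3"
  proof -
    have "c3 = e * ((1/2 - e) + 3*e^2/8)"
      by (simp add: c3_def power2_eq_square power3_eq_cube algebra_simps)
    then show ?thesis using e by simp
  qed
  moreover have "0 \<le> c4"
  proof -
    have "c4 = (1 - e) * ((1 - e)^2 - e^2/2)"
      by (simp add: c4_def power2_eq_square power3_eq_cube field_simps; algebra)
    moreover have "e^2 \<le> (1 - e)^2" using e by (intro power_mono) auto
    then have "0 \<le> (1 - e)^2 - e^2/2" using zero_le_power2[of e] by linarith
    ultimately show ?thesis using e by simp
  qed
  ultimately show ?thesis using conv by (simp add: add_nonneg_nonneg)
qed

lemma orient_smooth_pair_nonneg:
  fixes x :: "nat \<Rightarrow> complex" and e :: real
  assumes e: "0 \<le> e" "e \<le> 1/2"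
    and conv: "\<And>p q. p < q \<Longrightarrow> q \<le> 3 \<Longrightarrow> 0 \<le> orient (x p) (x q) y"
  shows "0 \<le> orient (smooth e (x 0) (x 1) (x 2)) (smooth e (x 1) (x 2) (x 3)) y"
proof -
  define c0 c1 c2 where "c0 = (1 - e)^2 - e^2/4" and "c1 = e^2/4" and "c2 = e/2 * (1 - e)"
  have "orient (smooth e (x 0) (x 1) (x 2)) (smooth e (x 1) (x 2) (x 3)) y =
      c0 * orient (x 1) (x 2) y + c1 * orient (x 0) (x 1) y + c2 * orient (x 0) (x 2) y
    + c1 * orient (x 0) (x 3) y + c2 * orient (x 1) (x 3) y + c1 * orient (x 2) (x 3) y"
    unfolding c0_def c1_def c2_def smooth_def orient_coords
    by (simp add: field_simps power2_eq_square; algebra)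
  moreover have "e^2 \<le> (1 - e)^2" using e by (intro power_mono) auto
  then have "0 \<le> c0" using zero_le_power2[of e] unfolding c0_def by linarith
  moreover have "0 \<le> c1" "0 \<le> c2" using e by (simp_all add: c1_def c2_def)
  ultimately show ?thesis using conv by (simp add: add_nonneg_nonneg)
qed

lemma wave_quadrilateral_orient:
  fixes x :: "nat \<Rightarrow> complex" and e :: real
  assumes e: "0 \<le> e" "e \<le> 1/2"
    and conv: "\<And>p q r. p < q \<Longrightarrow> q < r \<Longrightarrow> r \<le> 3 \<Longrightarrow> 0 \<le> orient (x p) (x q) (x r)"
  defines "c \<equiv> smooth e (x 1) (x 2) (x 3)" and "d \<equiv> smooth e (x 0) (x 1) (x 2)"
    and "m \<equiv> (x 1 + x 2) / 2"
  shows "0 \<le> orient m (x 2) c" "0 \<le> orient m c d" "0 \<le> orient m d (x 1)" "orient m (x 1) (x 2) = 0"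
    "0 \<le> orient (x 1) (x 2) c" "0 \<le> orient (x 1) (x 2) d"
proof -
  have mbc: "orient m (x 2) c = e/4 * orient (x 1) (x 2) (x 3)"
    unfolding m_def c_def smooth_def orient_coords by (simp add: field_simps; algebra)
  show "0 \<le> orient m (x 2) c" unfolding mbc using conv[of 1 2 3] e by simp
  have "orient m c d = (e/4 - 3*e^2/8) * (orient (x 0) (x 1) (x 2) + orient (x 1) (x 2) (x 3))
      + e^2/8 * (orient (x 0) (x 1) (x 3) + orient (x 0) (x 2) (x 3))"
    unfolding m_def c_def d_def smooth_def orient_coords
    by (simp add: field_simps power2_eq_square; algebra)
  moreover have "e/4 - 3*e^2/8 = e * (1/4 - 3*e/8)" by (simp add: power2_eq_square algebra_simps)
  ultimately show "0 \<le> orient m c d"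
    using conv[of 0 1 2] conv[of 1 2 3] conv[of 0 1 3] conv[of 0 2 3] e by simp
  have mda: "orient m d (x 1) = e/4 * orient (x 0) (x 1) (x 2)"
    unfolding m_def d_def smooth_def orient_coords by (simp add: field_simps; algebra)
  show "0 \<le> orient m d (x 1)" unfolding mda using conv[of 0 1 2] e by simp
  show "orient m (x 1) (x 2) = 0"
    unfolding m_def orient_coords by (simp add: field_simps; algebra)
  show "0 \<le> orient (x 1) (x 2) c"
    using conv[of 1 2 3] e by (simp add: c_def orient_smooth_third)
  show "0 \<le> orient (x 1) (x 2) d"
    using conv[of 0 1 2] e by (simp add: d_def orient_smooth_third orient_rotate[of "x 0"])
qed

lemma gtm_step_consecutive_nonneg:
  assumes conv: "convex_position k b" and k: "4 \<le> k" and e: "0 \<le> eps" "eps \<le> 1/2"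
  shows "0 \<le> orient (vtx k (gtm_step k eps b) j) (vtx k (gtm_step k eps b) (j + 1))
    (vtx k (gtm_step k eps b) (j + 2))"
proof -
  define x where "x m = vtx k b (j + (k - 1) + m)" for m
  have C: "vtx k (gtm_step k eps b) (j + t) = smooth eps (x t) (x (t + 1)) (x (t + 2))" for t
    using vtx_gtm_step[of k eps b j t] k by (simp add: x_def)
  have "0 \<le> orient (smooth eps (x 0) (x 1) (x 2)) (smooth eps (x 1) (x 2) (x 3))
      (smooth eps (x 2) (x 3) (x 4))"
    using e by (rule orient_smooth_consecutive_nonneg)
      (use convex_position_window[OF conv, where c = "j + (k - 1)"] k in \<open>simp add: x_def\<close>)
  then show ?thesis using C[of 0] C[of 1] C[of 2] by (simp add: numeral_eq_Suc)
qed

lemma gtm_step_far_nonneg: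
  assumes conv: "convex_position k b" and e: "0 \<le> eps" "eps \<le> 1/2"
    and i: "2 \<le> i" "i + 3 \<le> k"
  shows "0 \<le> orient (vtx k (gtm_step k eps b) i) (vtx k (gtm_step k eps b) (i + 1))
    (vtx k (gtm_step k eps b) 0)"
proof -
  define x where "x m = vtx k b (i + (k - 1) + m)" for m
  have C: "vtx k (gtm_step k eps b) (i + t) = smooth eps (x t) (x (t + 1)) (x (t + 2))" for t
    using vtx_gtm_step[of k eps b i t] i by (simp add: x_def)
  have C0: "vtx k (gtm_step k eps b) 0 =
      smooth eps (vtx k b (k - 1 + 0)) (vtx k b (k - 1 + 1)) (vtx k b (k - 1 + 2))"
    using vtx_gtm_step[of k eps b 0 0] i by (simp add: numeral_eq_Suc)
  have far: "0 \<le> orient (smooth eps (x 0) (x 1) (x 2)) (smooth eps (x 1) (x 2) (x 3)) (vtx k b (k - 1 + r))"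
    if "r \<le> 2" for r
  proof (rule orient_smooth_pair_nonneg[OF e])
    fix p q :: nat assume "p < q" "q \<le> 3"
    then have "0 \<le> orient (vtx k b (k - 1 + r + 0)) (vtx k b (k - 1 + r + (i + p - r)))
        (vtx k b (k - 1 + r + (i + q - r)))"
      using convex_position_window[OF conv, of 0 "i + p - r" "i + q - r" "k - 1 + r"] i that
      by (simp del: add_0_right)
    moreover have "k - 1 + r + (i + p - r) = i + (k - 1) + p" "k - 1 + r + (i + q - r) = i + (k - 1) + q"
      using i that by simp_all
    ultimately show "0 \<le> orient (x p) (x q) (vtx k b (k - 1 + r))"
      unfolding x_def using orient_rotate[of "vtx k b (k - 1 + r)"] by (simp add: ac_simps)
  qed
  have "0 \<le> orient (smooth eps (x 0) (x 1) (x 2)) (smooth eps (x 1) (x 2) (x 3))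
      (vtx k (gtm_step k eps b) 0)"
    unfolding C0 orient_smooth_third using far[of 0] far[of 1] far[of 2] e
    by (intro add_nonneg_nonneg mult_nonneg_nonneg) auto
  then show ?thesis using C[of 0] C[of 1] by (simp add: numeral_eq_Suc)
qed

lemma gtm_step_fan_nonneg:
  assumes conv: "convex_position k b" and k: "3 \<le> k" and e: "0 \<le> eps" "eps \<le> 1/2"
    and i: "i < k"
  shows "0 \<le> orient (vtx k (gtm_step k eps b) 0) (vtx k (gtm_step k eps b) i)
    (vtx k (gtm_step k eps b) (i + 1))"
proof -
  let ?C = "vtx k (gtm_step k eps b)"
  consider "i = 0" | "i = k - 1" | "k = 3" "i = 1" | "4 \<le> k" "i = 1" | "4 \<le> k" "i = k - 2"
    | "2 \<le> i" "i + 3 \<le> k"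
    using i k by linarith
  then show ?thesis
  proof cases
    case 2
    then have "?C (i + 1) = ?C 0" using k by (simp add: vtx_def)
    then show ?thesis by simp
  next
    case 3
    \<comment> \<open>for k = 3 the five vertices around two consecutive new vertices wrap around, so
      gtm_step_consecutive_nonneg does not apply\<close>
    have "?C 0 = smooth eps (b 2) (b 0) (b 1)" "?C 1 = smooth eps (b 0) (b 1) (b 2)"
      "?C 2 = smooth eps (b 1) (b 2) (b 0)"
      using vtx_gtm_step[of k eps b 0 0] vtx_gtm_step[of k eps b 1 0] vtx_gtm_step[of k eps b 2 0] 3
      by (simp_all add: vtx_def numeral_2_eq_2)
    then have "orient (?C 0) (?C 1) (?C 2) = (1 - 3*eps/2)^2 * orient (b 0) (b 1) (b 2)"
      by (simp add: orient_smooth_triangle)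
    moreover have "0 \<le> orient (b 0) (b 1) (b 2)"
      using convex_position_orient_nonneg[OF conv, of 0 1 2] 3 by simp
    ultimately show ?thesis using 3 by (simp add: numeral_2_eq_2)
  next
    case 4
    then show ?thesis using gtm_step_consecutive_nonneg[OF conv _ e, of 0] by simp
  next
    case 5
    have "0 \<le> orient (?C (k - 2)) (?C (k - 2 + 1)) (?C (k - 2 + 2))"
      by (rule gtm_step_consecutive_nonneg[OF conv 5(1) e])
    moreover have "k - 2 + 2 = k" using 5 by simp
    then have "?C (k - 2 + 2) = ?C 0" by (simp add: vtx_def)
    ultimately show ?thesis using 5 by (simp add: orient_rotate[of "?C 0"])
  next
    case 6
    then show ?thesis
      using gtm_step_far_nonneg[OF conv e] by (simp add: orient_rotate[of "?C 0"])
  qed simp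
qed

lemma wave_segment_orient:
  fixes j :: nat
  assumes conv: "convex_position k b" and k: "3 \<le> k" and e: "0 \<le> eps" "eps \<le> 1/2"
  defines "A \<equiv> vtx k b j" and "B \<equiv> vtx k b (j + 1)"
    and "C \<equiv> vtx k (gtm_step k eps b) (j + 1)" and "D \<equiv> vtx k (gtm_step k eps b) j"
  defines "M \<equiv> (A + B) / 2"
  shows "0 \<le> orient M B C" "0 \<le> orient M C D" "0 \<le> orient M D A" "orient M A B = 0"
    "0 \<le> orient A B C" "0 \<le> orient A B D"
proof -
  define x where "x m = vtx k b (j + (k - 1) + m)" for m
  have idx: "j + (k - 1) + 1 = j + k" "j + (k - 1) + 2 = j + 1 + k" using k by simp_all
  have "A = x 1" "B = x 2" unfolding A_def B_def x_def idx vtx_add_period by (rule refl)+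
  moreover have "C = smooth eps (x 1) (x 2) (x 3)" "D = smooth eps (x 0) (x 1) (x 2)"
    using vtx_gtm_step[of k eps b j 1] vtx_gtm_step[of k eps b j 0] k
    by (simp_all add: C_def D_def x_def numeral_eq_Suc)
  moreover have "0 \<le> orient (x p) (x q) (x r)" if "p < q" "q < r" "r \<le> 3" for p q r
    using convex_position_window[OF conv, of p q r "j + (k - 1)"] that k by (simp add: x_def)
  then have "0 \<le> orient ((x 1 + x 2) / 2) (x 2) (smooth eps (x 1) (x 2) (x 3))"
    "0 \<le> orient ((x 1 + x 2) / 2) (smooth eps (x 1) (x 2) (x 3)) (smooth eps (x 0) (x 1) (x 2))"
    "0 \<le> orient ((x 1 + x 2) / 2) (smooth eps (x 0) (x 1) (x 2)) (x 1)"
    "orient ((x 1 + x 2) / 2) (x 1) (x 2) = 0"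
    "0 \<le> orient (x 1) (x 2) (smooth eps (x 1) (x 2) (x 3))"
    "0 \<le> orient (x 1) (x 2) (smooth eps (x 0) (x 1) (x 2))"
    using wave_quadrilateral_orient[OF e] by blast+
  ultimately show "0 \<le> orient M B C" "0 \<le> orient M C D" "0 \<le> orient M D A" "orient M A B = 0"
    "0 \<le> orient A B C" "0 \<le> orient A B D"
    by (simp_all add: M_def)
qed

section \<open>Winding numbers of star-shaped polygons\<close>

definition segment_winding :: "complex \<Rightarrow> complex \<Rightarrow> complex \<Rightarrow> complex" where
  "segment_winding a b z = winding_number (linepath a b) z"

definition triangle_winding :: "complex \<Rightarrow> complex \<Rightarrow> complex \<Rightarrow> complex \<Rightarrow> complex" where
  "triangle_winding a b c z = segment_winding a b z + segment_winding b c z + segment_winding c a z"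

lemma segment_winding_reverse:
  "z \<notin> closed_segment a b \<Longrightarrow> segment_winding b a z = - segment_winding a b z"
  using winding_number_reversepath[of "linepath a b" z] by (simp add: segment_winding_def)

lemma winding_number_quad_path:
  assumes "z \<notin> closed_segment a b" "z \<notin> closed_segment b c" "z \<notin> closed_segment c d"
    "z \<notin> closed_segment d a"
  shows "winding_number (quad_path a b c d) z =
    segment_winding a b z + segment_winding b c z + segment_winding c d z + segment_winding d a z"
  using assms by (simp add: quad_path_def segment_winding_def winding_number_join path_image_join)

lemma convex_hull_flat_triangle:
  assumes "orient a b c = 0"
  shows "convex hull {a, b, c} \<subseteq> closed_segment a b \<union> closed_segment b c \<union> closed_segment c a"
proof -
  consider "a \<in> convex hull {b, c}" | "b \<in> convex hull {c, a}" | "c \<in> convex hull {a, b}"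
    using collinear_if_orient_eq_0[OF assms]
    unfolding collinear_between_cases between_mem_segment segment_convex_hull by blast
  then show ?thesis
  proof cases
    case 1
    then have "convex hull {a, b, c} = convex hull {b, c}" by (simp add: hull_redundant)
    then show ?thesis by (auto simp: segment_convex_hull)
  next
    case 2
    then have "convex hull {b, c, a} = convex hull {c, a}" by (simp add: hull_redundant)
    then show ?thesis by (auto simp: segment_convex_hull insert_commute)
  next
    case 3
    then have "convex hull {c, a, b} = convex hull {a, b}" by (simp add: hull_redundant)
    then show ?thesis by (auto simp: segment_convex_hull insert_commute)
  qed
qed

lemma triangle_winding_cases:
  assumes o: "0 \<le> orient a b c"
    and z: "z \<notin> closed_segment a b" "z \<notin> closed_segment b c" "z \<notin> closed_segment c a"
  shows "triangle_winding a b c z = 0 \<or>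
    triangle_winding a b c z = 1 \<and> z \<in> convex hull {a, b, c} \<and> 0 < orient a b z"
proof -
  let ?g = "linepath a b +++ linepath b c +++ linepath c a"
  have wn: "winding_number ?g z = triangle_winding a b c z"
    using z by (simp add: triangle_winding_def segment_winding_def winding_number_join path_image_join)
  show ?thesis
  proof (cases "z \<in> convex hull {a, b, c}")
    case False
    have "path_image ?g \<subseteq> convex hull {a, b, c}"
      by (simp add: path_image_join segment_convex_hull hull_mono)
    then have "winding_number ?g z = 0"
      by (intro winding_number_zero_outside[OF _ convex_convex_hull _ False]) auto
    then show ?thesis using wn by simp
  next
    case True
    then obtain u v w where uvw: "0 \<le> u" "0 \<le> v" "0 \<le> w" "u + v + w = 1"
      and z_eq: "z = u *\<^sub>R a + v *\<^sub>R b + w *\<^sub>R c"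
      unfolding convex_hull_3 by blast
    have "orient a b z = w * orient a b c"
      unfolding z_eq orient_convex_combination[OF uvw(4)] by simp
    moreover have "w \<noteq> 0"
    proof
      assume "w = 0"
      then have "z = (1 - v) *\<^sub>R a + v *\<^sub>R b" "v \<le> 1" using z_eq uvw by simp_all
      then show False using z(1) uvw by (auto simp: closed_segment_def)
    qed
    moreover have "orient a b c \<noteq> 0"
      using convex_hull_flat_triangle True z by blast
    ultimately have pos: "0 < orient a b z" using o uvw(3) by simp
    have "z \<in> interior (convex hull {a, b, c})"
      using True z by (simp add: interior_of_triangle)
    moreover have "Im ((b - a) * cnj (b - z)) = orient a b z"
      by (simp add: orient_coords algebra_simps)
    ultimately have "winding_number ?g z = 1" using winding_number_triangle pos by simp
    then show ?thesis using wn True pos by simp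
  qed
qed

lemma triangle_winding_nat:
  assumes "0 \<le> orient a b c"
    and "z \<notin> closed_segment a b" "z \<notin> closed_segment b c" "z \<notin> closed_segment c a"
  shows "\<exists>n::nat. triangle_winding a b c z = of_nat n"
  using triangle_winding_cases[OF assms] by (metis of_nat_0 of_nat_1)

lemma star_quadrilateral_winding_nat:
  assumes "0 \<le> orient m a b" "0 \<le> orient m b c" "0 \<le> orient m c d" "0 \<le> orient m d a"
    and z: "\<And>p q. p \<in> {a, b, c, d, m} \<Longrightarrow> q \<in> {a, b, c, d, m} \<Longrightarrow> z \<notin> closed_segment p q"
  shows "\<exists>n::nat. winding_number (quad_path a b c d) z = of_nat n"
proof -
  have "winding_number (quad_path a b c d) z =
      triangle_winding m a b z + triangle_winding m b c z
      + triangle_winding m c d z + triangle_winding m d a z"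
    using winding_number_quad_path[of z a b c d] z segment_winding_reverse[of z m]
    by (simp add: triangle_winding_def)
  moreover obtain n1 n2 n3 n4 :: nat where
    "triangle_winding m a b z = n1" "triangle_winding m b c z = n2"
    "triangle_winding m c d z = n3" "triangle_winding m d a z = n4"
    using triangle_winding_nat assms by (metis insertCI)
  ultimately have "winding_number (quad_path a b c d) z = of_nat (n1 + n2 + n3 + n4)" by simp
  then show ?thesis by blast
qed

lemma polygon_winding_fan:
  assumes "X k = X 0" and z: "\<And>i j. z \<notin> closed_segment (X i) (X j)"
  shows "(\<Sum>i<k. segment_winding (X i) (X (Suc i)) z) =
    (\<Sum>i<k. triangle_winding (X 0) (X i) (X (Suc i)) z)"
proof -
  define h where "h i = segment_winding (X 0) (X i) z" for i
  have "triangle_winding (X 0) (X i) (X (Suc i)) z =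
      segment_winding (X i) (X (Suc i)) z + (h i - h (Suc i))" for i
    using segment_winding_reverse[OF z[of 0 "Suc i"]] by (simp add: triangle_winding_def h_def)
  then have "(\<Sum>i<k. triangle_winding (X 0) (X i) (X (Suc i)) z) =
      (\<Sum>i<k. segment_winding (X i) (X (Suc i)) z) + (\<Sum>i<k. h i - h (Suc i))"
    by (simp add: sum.distrib)
  moreover have "(\<Sum>i<k. h i - h (Suc i)) = 0"
    using sum_lessThan_telescope'[of h k] assms(1) by (simp add: h_def)
  ultimately show ?thesis by simp
qed

lemma ladder_winding_sum:
  assumes "B k = B 0" "C k = C 0"
    and z: "\<And>p q. p \<in> range B \<union> range C \<Longrightarrow> q \<in> range B \<union> range C \<Longrightarrow> z \<notin> closed_segment p q"
  shows "(\<Sum>i<k. winding_number (quad_path (B i) (B (Suc i)) (C (Suc i)) (C i)) z) =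
    (\<Sum>i<k. segment_winding (B i) (B (Suc i)) z) - (\<Sum>i<k. segment_winding (C i) (C (Suc i)) z)"
proof -
  define s where "s i = segment_winding (B i) (C i) z" for i
  have "winding_number (quad_path (B i) (B (Suc i)) (C (Suc i)) (C i)) z =
      segment_winding (B i) (B (Suc i)) z - segment_winding (C i) (C (Suc i)) z + (s (Suc i) - s i)" for i
    using winding_number_quad_path[of z] segment_winding_reverse[of z "C i" "C (Suc i)"]
      segment_winding_reverse[of z "B i" "C i"] z by (simp add: s_def)
  moreover have "(\<Sum>i<k. s (Suc i) - s i) = 0"
    using sum_lessThan_telescope[of s k] assms(1,2) by (simp add: s_def)
  ultimately show ?thesis by (simp add: sum.distrib sum_subtractf)
qed

lemma fan_winding_nonneg:
  assumes "\<And>i. i < k \<Longrightarrow> 0 \<le> orient (X 0) (X i) (X (Suc i))"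
    and z: "\<And>i j. z \<notin> closed_segment (X i) (X j)"
  shows "0 \<le> Re (\<Sum>i<k. triangle_winding (X 0) (X i) (X (Suc i)) z)"
proof -
  have "0 \<le> Re (triangle_winding (X 0) (X i) (X (Suc i)) z)" if "i < k" for i
    using triangle_winding_nat[OF assms(1)[OF that] z z z] by auto
  then show ?thesis unfolding Re_sum by (intro sum_nonneg) simp
qed

lemma fan_winding_le_one:
  assumes o: "\<And>m n. m \<le> n \<Longrightarrow> n \<le> k \<Longrightarrow> 0 \<le> orient (X 0) (X m) (X n)"
    and z: "\<And>i j. z \<notin> closed_segment (X i) (X j)"
  shows "Re (\<Sum>i<k. triangle_winding (X 0) (X i) (X (Suc i)) z) \<le> 1"
proof -
  let ?T = "\<lambda>i. triangle_winding (X 0) (X i) (X (Suc i)) z"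
  have T: "?T i = 0 \<or> ?T i = 1 \<and> z \<in> convex hull {X 0, X i, X (Suc i)} \<and> 0 < orient (X 0) (X i) z"
    if "i < k" for i
    using triangle_winding_cases[OF o z z z] that by simp
  \<comment> \<open>the fan triangles have disjoint interiors, so z lies in at most one of them\<close>
  have not_both: False if "i < i'" "i' < k" "?T i = 1" "?T i' = 1" for i i'
  proof -
    have "z \<in> convex hull {X 0, X i, X (Suc i)}" using T[of i] that by simp
    then obtain u v w where uvw: "0 \<le> u" "0 \<le> v" "0 \<le> w" "u + v + w = 1"
      and "z = u *\<^sub>R X 0 + v *\<^sub>R X i + w *\<^sub>R X (Suc i)"
      unfolding convex_hull_3 by blast
    then have "orient (X 0) (X i') z =
        v * orient (X 0) (X i') (X i) + w * orient (X 0) (X i') (X (Suc i))"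
      using orient_convex_combination by simp
    moreover have "orient (X 0) (X i') (X i) \<le> 0" "orient (X 0) (X i') (X (Suc i)) \<le> 0"
      using o[of i i'] o[of "Suc i" i'] that orient_swap[of "X 0" "X i'"] by fastforce+
    ultimately have "orient (X 0) (X i') z \<le> 0"
      using uvw by (simp add: add_nonpos_nonpos mult_nonneg_nonpos)
    then show False using T[of i'] that by simp
  qed
  have unique: "i = i'" if "i < k" "i' < k" "?T i = 1" "?T i' = 1" for i i'
    using not_both[of i i'] not_both[of i' i] that by (cases i i' rule: linorder_cases) auto
  show ?thesis
  proof (cases "\<exists>i<k. ?T i = 1")
    case True
    then obtain i where i: "i < k" "?T i = 1" by blast
    have "(\<Sum>i<k. ?T i) = ?T i + (\<Sum>i\<in>{..<k} - {i}. ?T i)"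
      using i by (simp add: sum.remove)
    moreover have "(\<Sum>i\<in>{..<k} - {i}. ?T i) = 0"
      using T unique i by (intro sum.neutral) blast
    ultimately show ?thesis using i by simp
  next
    case False
    then have "(\<Sum>i<k. ?T i) = 0" using T by (intro sum.neutral) blast
    then show ?thesis by simp
  qed
qed

section \<open>Disjointness of the wave-segments\<close>

lemma interior_Union_closed_empty_interior:
  "finite F \<Longrightarrow> (\<And>X. X \<in> F \<Longrightarrow> closed X \<and> interior X = {}) \<Longrightarrow> interior (\<Union>F) = {}"
proof (induction F rule: finite_induct)
  case (insert X F)
  then show ?case using interior_closed_Un_empty_interior[of X "\<Union>F"] by simp
qed simp

lemma exists_point_off_segments:
  fixes P :: "complex set"
  assumes "finite P" "open U" "U \<noteq> {}"
  shows "\<exists>z\<in>U. \<forall>p\<in>P. \<forall>q\<in>P. z \<notin> closed_segment p q"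
proof (rule ccontr)
  let ?S = "\<Union>((\<lambda>(p, q). closed_segment p q) ` (P \<times> P))"
  assume "\<not> ?thesis"
  then have "U \<subseteq> ?S" by fastforce
  then have "U \<subseteq> interior ?S" by (rule interior_maximal[OF _ assms(2)])
  moreover have "interior ?S = {}"
    by (rule interior_Union_closed_empty_interior) (use assms(1) in \<open>auto simp: interior_closed_segment\<close>)
  ultimately show False using assms(3) by simp
qed

lemma open_quad_interior: "open (quad_interior a b c d)"
proof -
  let ?g = "quad_path a b c d"
  have "path ?g" "pathfinish ?g = pathstart ?g" by (simp_all add: quad_path_def)
  moreover have "quad_interior a b c d = (\<Union>n\<in>-{0}. {z. z \<notin> path_image ?g \<and> winding_number ?g z = n})"
    unfolding quad_interior_def by auto
  ultimately show ?thesis using open_winding_number_levelsets by (simp add: open_UN)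
qed

definition wave_path :: "nat \<Rightarrow> real \<Rightarrow> (nat \<Rightarrow> complex) \<Rightarrow> nat \<Rightarrow> real \<Rightarrow> complex" where
  "wave_path k eps b j =
     quad_path (vtx k b j) (vtx k b (j + 1)) (vtx k (gtm_step k eps b) (j + 1)) (vtx k (gtm_step k eps b) j)"

definition wave_points :: "nat \<Rightarrow> real \<Rightarrow> (nat \<Rightarrow> complex) \<Rightarrow> complex set" where
  "wave_points k eps b =
     range (vtx k b) \<union> range (vtx k (gtm_step k eps b)) \<union> range (\<lambda>i. (vtx k b i + vtx k b (i + 1)) / 2)"

lemma finite_wave_points:
  assumes "0 < k"
  shows "finite (wave_points k eps b)"
proof -
  have range_periodic: "range f \<subseteq> f ` {..<k}" if "\<And>i. f (i mod k) = f i" for f :: "nat \<Rightarrow> complex"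
  proof
    fix x assume "x \<in> range f"
    then obtain i where "x = f i" by blast
    then have "x = f (i mod k)" using that by simp
    then show "x \<in> f ` {..<k}" using assms by simp
  qed
  have "vtx k b (i mod k) = vtx k b i" "vtx k (gtm_step k eps b) (i mod k) = vtx k (gtm_step k eps b) i"
    "vtx k b (Suc (i mod k)) = vtx k b (Suc i)"
    for i using vtx_mod_add[of k b i 1] by (simp_all add: vtx_def)
  then show ?thesis unfolding wave_points_def
    by (intro finite_UnI finite_subset[OF range_periodic]) simp_all
qed

lemma wave_winding_nat:
  assumes conv: "convex_position k b" and k: "3 \<le> k" and e: "0 \<le> eps" "eps \<le> 1/2"
    and z: "\<And>p q. p \<in> wave_points k eps b \<Longrightarrow> q \<in> wave_points k eps b \<Longrightarrow> z \<notin> closed_segment p q"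
  shows "\<exists>n::nat. winding_number (wave_path k eps b i) z = of_nat n"
  unfolding wave_path_def
proof (rule star_quadrilateral_winding_nat[where m = "(vtx k b i + vtx k b (i + 1)) / 2"])
  show "z \<notin> closed_segment p q"
    if "p \<in> {vtx k b i, vtx k b (i + 1), vtx k (gtm_step k eps b) (i + 1), vtx k (gtm_step k eps b) i,
        (vtx k b i + vtx k b (i + 1)) / 2}"
      "q \<in> {vtx k b i, vtx k b (i + 1), vtx k (gtm_step k eps b) (i + 1), vtx k (gtm_step k eps b) i,
        (vtx k b i + vtx k b (i + 1)) / 2}" for p q
    using that by (intro z) (auto simp: wave_points_def)
qed (use wave_segment_orient[OF conv k e, of i] in simp_all)

lemma wave_winding_sum_le_one:
  assumes conv: "convex_position k b" and k: "3 \<le> k" and e: "0 \<le> eps" "eps \<le> 1/2"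
    and z: "\<And>p q. p \<in> wave_points k eps b \<Longrightarrow> q \<in> wave_points k eps b \<Longrightarrow> z \<notin> closed_segment p q"
  shows "Re (\<Sum>i<k. winding_number (wave_path k eps b i) z) \<le> 1"
proof -
  define B where "B = vtx k b"
  define C where "C = vtx k (gtm_step k eps b)"
  have gB: "\<And>i i'. z \<notin> closed_segment (B i) (B i')"
    and gC: "\<And>i i'. z \<notin> closed_segment (C i) (C i')"
    and gBC: "\<And>p q. p \<in> range B \<union> range C \<Longrightarrow> q \<in> range B \<union> range C \<Longrightarrow> z \<notin> closed_segment p q"
    using z unfolding B_def C_def wave_points_def by blast+
  have "B k = B 0" "C k = C 0" by (simp_all add: B_def C_def vtx_def)
  then have "(\<Sum>i<k. winding_number (wave_path k eps b i) z) =
      (\<Sum>i<k. triangle_winding (B 0) (B i) (B (Suc i)) z)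
      - (\<Sum>i<k. triangle_winding (C 0) (C i) (C (Suc i)) z)"
    using ladder_winding_sum[of B k C, OF _ _ gBC] polygon_winding_fan[of B k, OF _ gB]
      polygon_winding_fan[of C k, OF _ gC]
    by (simp add: wave_path_def B_def C_def)
  moreover have "Re (\<Sum>i<k. triangle_winding (B 0) (B i) (B (Suc i)) z) \<le> 1"
    using convex_position_orient_nonneg_cyclic[OF conv, of 0] gB
    by (intro fan_winding_le_one) (simp_all add: B_def)
  moreover have "0 \<le> Re (\<Sum>i<k. triangle_winding (C 0) (C i) (C (Suc i)) z)"
    using gtm_step_fan_nonneg[OF conv k e] gC by (intro fan_winding_nonneg) (simp_all add: C_def)
  ultimately show ?thesis by simp
qed

lemma wave_interiors_disjoint:
  assumes conv: "convex_position k b" and k: "3 \<le> k" and e: "0 \<le> eps" "eps \<le> 1/2"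
    and j: "j < k" "j' < k" "j \<noteq> j'"
  shows "wave_interior k eps b j \<inter> wave_interior k eps b j' = {}"
proof (rule ccontr)
  assume "wave_interior k eps b j \<inter> wave_interior k eps b j' \<noteq> {}"
  moreover have "open (wave_interior k eps b j \<inter> wave_interior k eps b j')"
    unfolding wave_interior_def by (intro open_Int open_quad_interior)
  moreover have "finite (wave_points k eps b)" using k by (simp add: finite_wave_points)
  ultimately obtain z where z: "z \<in> wave_interior k eps b j \<inter> wave_interior k eps b j'"
    and "\<forall>p\<in>wave_points k eps b. \<forall>q\<in>wave_points k eps b. z \<notin> closed_segment p q"
    using exists_point_off_segments by blast
  then have generic: "\<And>p q. p \<in> wave_points k eps b \<Longrightarrow> q \<in> wave_points k eps b \<Longrightarrow> z \<notin> closed_segment p q"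
    by blast
  let ?W = "\<lambda>i. Re (winding_number (wave_path k eps b i) z)"
  have W_nonneg: "0 \<le> ?W i" for i
    using wave_winding_nat[OF conv k e generic, of i] by auto
  have W_ge_1: "1 \<le> ?W i" if "z \<in> wave_interior k eps b i" for i
  proof -
    have "winding_number (wave_path k eps b i) z \<noteq> 0"
      using that by (simp add: wave_interior_def quad_interior_def wave_path_def)
    then show ?thesis using wave_winding_nat[OF conv k e generic, of i] by (auto simp: of_nat_neq_0)
  qed
  have "?W j + ?W j' = (\<Sum>i\<in>{j, j'}. ?W i)" using j by simp
  also have "\<dots> \<le> (\<Sum>i<k. ?W i)" by (rule sum_mono2) (use j W_nonneg in auto)
  also have "\<dots> \<le> 1" using wave_winding_sum_le_one[OF conv k e generic] by (simp add: Re_sum)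
  finally show False using W_ge_1[of j] W_ge_1[of j'] z by simp
qed

section \<open>No twisted wave-segment\<close>

lemma open_segment_nearby:
  assumes "x \<in> open_segment a b"
  obtains d where "0 < d" "\<And>t. \<bar>t\<bar> \<le> d \<Longrightarrow> x + of_real t * (b - a) \<in> closed_segment a b"
proof -
  obtain u where u: "0 < u" "u < 1" and x: "x = (1 - u) *\<^sub>R a + u *\<^sub>R b"
    using assms by (auto simp: in_segment)
  have "x + of_real t * (b - a) \<in> closed_segment a b" if "\<bar>t\<bar> \<le> min u (1 - u)" for t
  proof -
    have "x + of_real t * (b - a) = (1 - (u + t)) *\<^sub>R a + (u + t) *\<^sub>R b"
      unfolding x by (simp add: scaleR_conv_of_real algebra_simps)
    moreover have "0 \<le> u + t" "u + t \<le> 1" using that by auto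
    ultimately show ?thesis by (auto simp: in_segment)
  qed
  then show ?thesis using u by (intro that[of "min u (1 - u)"]) auto
qed

lemma collinear_segments_not_cross:
  assumes "orient p q r = 0" "orient p q s = 0"
  shows "\<not> segments_cross p q r s"
proof
  assume "segments_cross p q r s"
  then obtain x where X: "closed_segment p q \<inter> closed_segment r s = {x}"
    "x \<in> open_segment p q" "x \<in> open_segment r s"
    unfolding segments_cross_def by blast
  then have "p \<noteq> q" "r \<noteq> s" by auto
  then obtain a c where ra: "r - p = of_real a * (q - p)" and sc: "s - p = of_real c * (q - p)"
    using assms cross2_eq_0_imp_parallel[of "q - p"] unfolding orient_def by (metis right_minus_eq)
  have "s - r = (s - p) - (r - p)" by simp
  also have "\<dots> = of_real (c - a) * (q - p)" unfolding ra sc by (simp add: algebra_simps)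
  finally have sr: "s - r = of_real (c - a) * (q - p)" .
  then have "c \<noteq> a" using \<open>r \<noteq> s\<close> by auto
  obtain d1 where d1: "0 < d1" "\<And>t. \<bar>t\<bar> \<le> d1 \<Longrightarrow> x + of_real t * (q - p) \<in> closed_segment p q"
    using open_segment_nearby[OF X(2)] by blast
  obtain d2 where d2: "0 < d2" "\<And>t. \<bar>t\<bar> \<le> d2 \<Longrightarrow> x + of_real t * (s - r) \<in> closed_segment r s"
    using open_segment_nearby[OF X(3)] by blast
  \<comment> \<open>moving from x along the common line stays in both segments for a short while\<close>
  define t where "t = min d1 (d2 * \<bar>c - a\<bar>)"
  have t: "0 < t" "t \<le> d1" "\<bar>t / (c - a)\<bar> \<le> d2"
    using d1 d2 \<open>c \<noteq> a\<close> by (auto simp: t_def divide_le_eq abs_mult)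
  have "x + of_real t * (q - p) \<in> closed_segment p q" using d1(2) t by simp
  moreover have "x + of_real t * (q - p) = x + of_real (t / (c - a)) * (s - r)"
    using \<open>c \<noteq> a\<close> unfolding sr by (simp add: field_simps)
  then have "x + of_real t * (q - p) \<in> closed_segment r s" using d2(2)[OF t(3)] by simp
  ultimately have "x + of_real t * (q - p) = x" using X(1) by blast
  then show False using t(1) \<open>p \<noteq> q\<close> by simp
qed

lemma one_side_segments_not_cross:
  assumes "0 \<le> orient p q r" "0 \<le> orient p q s"
  shows "\<not> segments_cross p q r s"
proof
  assume cross: "segments_cross p q r s"
  then obtain x where x: "x \<in> open_segment p q" "x \<in> open_segment r s"
    unfolding segments_cross_def by blast
  obtain t where "x = (1 - t) *\<^sub>R p + t *\<^sub>R q" using x(1) by (auto simp: in_segment)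
  then have "orient p q x = 0"
    using orient_convex_combination[of "1 - t" t 0 p q p q q] by simp
  moreover obtain u where u: "0 < u" "u < 1" and "x = (1 - u) *\<^sub>R r + u *\<^sub>R s"
    using x(2) by (auto simp: in_segment)
  then have "orient p q x = (1 - u) * orient p q r + u * orient p q s"
    using orient_convex_combination[of "1 - u" u 0 p q r s s] by simp
  ultimately have "orient p q r = 0" "orient p q s = 0"
    using assms u by (smt (verit) mult_nonneg_nonneg mult_pos_pos)+
  then show False using collinear_segments_not_cross cross by blast
qed

lemma wave_segment_not_twisted:
  assumes conv: "convex_position k b" and k: "3 \<le> k" and e: "0 \<le> eps" "eps \<le> 1/2"
  shows "\<not> wave_twisted k eps b j"
proof -
  define A where "A = vtx k b j"
  define B where "B = vtx k b (j + 1)"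
  define C where "C = vtx k (gtm_step k eps b) (j + 1)"
  define D where "D = vtx k (gtm_step k eps b) j"
  note o = wave_segment_orient[OF conv k e, of j, folded A_def B_def C_def D_def]
  have "\<not> segments_cross A B C D" using o by (intro one_side_segments_not_cross) simp_all
  \<comment> \<open>the midpoint of AB sees CD counterclockwise, so A or B does\<close>
  moreover have "\<not> segments_cross B C D A"
  proof -
    have "orient ((A + B) / 2) C D = (orient A C D + orient B C D) / 2"
      by (simp add: orient_coords field_simps; algebra)
    then have "0 \<le> orient A C D + orient B C D" using o by simp
    show ?thesis
    proof (cases "0 \<le> orient B C D")
      case True
      then show ?thesis using o orient_rotate[of B C A]
        by (intro one_side_segments_not_cross) (simp_all add: orient_rotate[of A])
    next
      case False
      then have "0 \<le> orient A C D" using \<open>0 \<le> orient A C D + orient B C D\<close> by linarith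
      then have "\<not> segments_cross D A B C" using o orient_rotate[of D A]
        by (intro one_side_segments_not_cross) (simp_all add: orient_rotate[of A])
      then show ?thesis unfolding segments_cross_def by (auto simp: Int_commute)
    qed
  qed
  ultimately show ?thesis unfolding wave_twisted_def quad_twisted_def A_def B_def C_def D_def by blast
qed

theorem mainTheorem7:
  fixes k :: nat and eps :: real and b :: "nat \<Rightarrow> complex"
  assumes "k \<ge> 3" and "0 \<le> eps" and "eps < 1/2"
    and "convex_ccw_polygon k b"
  shows "(\<forall>j<k. \<not> wave_twisted k eps b j) \<and>
         (\<forall>j<k. \<forall>j'<k. j \<noteq> j' \<longrightarrow> wave_interior k eps b j \<inter> wave_interior k eps b j' = {})"
proof -
  have conv: "convex_position k b" by (rule convex_ccw_polygon_imp_convex_position[OF assms(4)])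
  have "eps \<le> 1/2" using assms(3) by simp
  then show ?thesis
    using wave_segment_not_twisted[OF conv assms(1,2)] wave_interiors_disjoint[OF conv assms(1,2)]
    by blast
qed

end
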